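(* Let $(\mathfrak{h},[\cdot,\cdot])$ be a finite-dimensional real left Leibniz algebra and let $x\stackrel{c}{\rhd}y=\exp(\mathrm{ad}_x)(y)$ be its canonical linear Lie rack operation. Then \[x\stackrel{c}{\rhd}y=\sum_{n=0}^\infty A^0_{n,1}(x,\ldots,x,y),\] where $A^0_{0,1}(x,y)=y$ and, for $n\ge1$, \[A^0_{n,1}(x_1,\ldots,x_n,y)=\frac{1}{(n!)^2}\sum_{\sigma\in S_n}\mathrm{ad}_{x_{\sigma(1)}}\circ\cdots\circ\mathrm{ad}_{x_{\sigma(n)}}(y),\] $S_n$ being the symmetric group on $\{1,\ldots,n\}$. Furthermore, writing $A^0_{n,1}(x,y)=A^0_{n,1}(x,\ldots,x,y)$, for all integers $p,q\ge1$ and all $x,y,z\in\mathfrak{h}$, \[A^0_{p,1}(x,A^0_{q,1}(y,z))=\sum_{s_1+\cdots+s_q+k=p}A^0_{q,1}\big(A^0_{s_1,1}(x,y),\ldots,A^0_{s_q,1}(x,y),A^0_{k,1}(x,z)\big),\] the sum over all tuples of nonnegative integers $(s_1,\ldots,s_q,k)$ summing to $p$.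
   Context: A left Leibniz algebra is a vector space with bilinear bracket satisfying $[u,[v,w]]=[[u,v],w]+[v,[u,w]]$; $\mathrm{ad}_x(y)=[x,y]$. *)

theory Defs
  imports "HOL-Analysis.Analysis" "HOL-Combinatorics.Permutations"
begin

definition left_leibniz :: "('a::euclidean_space \<Rightarrow> 'a \<Rightarrow> 'a) \<Rightarrow> bool" where
  "left_leibniz br \<longleftrightarrow> bilinear br \<and>
     (\<forall>u v w. br u (br v w) = br (br u v) w + br v (br u w))"

definition canon_rack :: "('a::euclidean_space \<Rightarrow> 'a \<Rightarrow> 'a) \<Rightarrow> 'a \<Rightarrow> 'a \<Rightarrow> 'a" where
  "canon_rack br x y = (\<Sum>n. (1 / fact n) *\<^sub>R ((br x ^^ n) y))"

text \<open>A^0_{n,1}(x_1,...,x_n,y), with the arguments x_1..x_n given as xs 0, ..., xs (n-1),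
  and permutations of {0..<n} standing for S_n.\<close>
definition A0 :: "('a::euclidean_space \<Rightarrow> 'a \<Rightarrow> 'a) \<Rightarrow> nat \<Rightarrow> (nat \<Rightarrow> 'a) \<Rightarrow> 'a \<Rightarrow> 'a" where
  "A0 br n xs y = (if n = 0 then y else
     (1 / (fact n)^2) *\<^sub>R
       (\<Sum>\<sigma> \<in> {\<sigma>. \<sigma> permutes {0..<n}}.
          foldr (\<lambda>i acc. br (xs (\<sigma> i)) acc) [0..<n] y))"

end

theory Submission
  imports Defs
begin

text \<open>
  On a constant tuple, A0 n (x, ..., x, y) is the divided power ad_x^n(y)/n!, so the series
  is the exponential series of the bounded operator ad_x. The left Leibniz identity says that
  ad_x is a derivation of the bracket, hence its divided powers D^[n] = D^n/n! obey the rule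
  D^[p][u, v] = \<Sum>_{a+b=p} [D^[a]u, D^[b]v]. Pushing D^[p] through a chain
  ad_{u_1} ... ad_{u_q} w distributes it over the weak compositions of p into q + 1 parts; with
  all u_i = y the left-hand side is 1/q! times this sum, and since permuting the first q parts
  permutes the weak compositions, symmetrising over S_q gives the right-hand side.
\<close>

definition divided_power :: "('a::real_vector \<Rightarrow> 'a) \<Rightarrow> nat \<Rightarrow> 'a \<Rightarrow> 'a" where
  "divided_power D n v = (1 / fact n) *\<^sub>R (D ^^ n) v"

lemma linear_divided_power: "linear D \<Longrightarrow> linear (divided_power D n)"
proof -
  assume "linear D"
  then have "linear (D ^^ n)"
    by (induction n) (simp_all add: linear_id id_def[symmetric] linear_compose)
  then show ?thesis
    unfolding divided_power_def by (rule linear_compose_scale_right)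
qed

lemma summable_divided_power:
  fixes f :: "'a::banach \<Rightarrow> 'a"
  assumes "bounded_linear f"
  shows "summable (\<lambda>n. divided_power f n y)"
proof -
  obtain K where K: "K > 0" "\<And>v. norm (f v) \<le> norm v * K"
    using bounded_linear.pos_bounded[OF assms] by blast
  have bound: "norm ((f ^^ n) y) \<le> norm y * K ^ n" for n
  proof (induction n)
    case (Suc n)
    have "norm ((f ^^ Suc n) y) \<le> norm ((f ^^ n) y) * K"
      using K(2) by simp
    also have "\<dots> \<le> norm y * K ^ n * K"
      using Suc K(1) by (simp add: mult_right_mono)
    finally show ?case by (simp add: mult_ac)
  qed simp
  show ?thesis
  proof (rule summable_comparison_test'[OF summable_mult[OF summable_exp, of "norm y" K]])
    show "norm (divided_power f n y) \<le> norm y * (inverse (fact n) * K ^ n)" for n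
      using mult_left_mono[OF bound, of "inverse (fact n)" n]
      by (simp add: divided_power_def divide_inverse mult_ac)
  qed
qed

definition derivation :: "('a::real_vector \<Rightarrow> 'a \<Rightarrow> 'a) \<Rightarrow> ('a \<Rightarrow> 'a) \<Rightarrow> bool" where
  "derivation br D \<longleftrightarrow> linear D \<and> (\<forall>u v. D (br u v) = br (D u) v + br u (D v))"

lemma derivation_funpow_Leibniz:
  assumes "derivation br D"
  shows "(D ^^ p) (br u v) =
    (\<Sum>a\<le>p. of_nat (p choose a) *\<^sub>R br ((D ^^ a) u) ((D ^^ (p - a)) v))"
proof (induction p)
  case 0
  show ?case by simp
next
  case (Suc p)
  have lin: "linear D" and Leibniz: "\<And>u v. D (br u v) = br (D u) v + br u (D v)"
    using assms by (simp_all add: derivation_def)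
  define X where "X a = br ((D ^^ a) u) ((D ^^ (Suc p - a)) v)" for a
  have "(D ^^ Suc p) (br u v) =
      (\<Sum>a\<le>p. of_nat (p choose a) *\<^sub>R D (br ((D ^^ a) u) ((D ^^ (p - a)) v)))"
    using Suc by (simp add: linear_sum[OF lin] linear_cmul[OF lin])
  also have "\<dots> = (\<Sum>a\<le>p. of_nat (p choose a) *\<^sub>R X (Suc a) + of_nat (p choose a) *\<^sub>R X a)"
    by (intro sum.cong refl) (simp add: X_def Leibniz Suc_diff_le scaleR_add_right)
  also have "\<dots> = (\<Sum>a\<le>p. of_nat (p choose a) *\<^sub>R X (Suc a))
      + (\<Sum>a\<le>Suc p. of_nat (p choose a) *\<^sub>R X a)"
    by (simp add: sum.distrib)
  also have "\<dots> = (\<Sum>a\<le>p. of_nat (p choose a) *\<^sub>R X (Suc a))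
      + (X 0 + (\<Sum>a\<le>p. of_nat (p choose Suc a) *\<^sub>R X (Suc a)))"
    by (simp only: sum.atMost_Suc_shift) simp
  also have "\<dots> = X 0 + (\<Sum>a\<le>p. of_nat (Suc p choose Suc a) *\<^sub>R X (Suc a))"
    by (simp add: sum.distrib scaleR_add_left)
  also have "\<dots> = (\<Sum>a\<le>Suc p. of_nat (Suc p choose a) *\<^sub>R X a)"
    by (simp add: sum.atMost_Suc_shift del: sum.atMost_Suc)
  finally show ?case
    by (simp add: X_def)
qed

lemma divided_power_Leibniz:
  assumes "bilinear br" and "derivation br D"
  shows "divided_power D p (br u v) =
    (\<Sum>a\<le>p. br (divided_power D a u) (divided_power D (p - a) v))"
proof -
  have "divided_power D p (br u v) =
      (\<Sum>a\<le>p. (of_nat (p choose a) / fact p) *\<^sub>R br ((D ^^ a) u) ((D ^^ (p - a)) v))"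
    by (simp add: divided_power_def derivation_funpow_Leibniz[OF assms(2)] scaleR_sum_right)
  also have "\<dots> = (\<Sum>a\<le>p. br (divided_power D a u) (divided_power D (p - a) v))"
  proof (intro sum.cong refl)
    fix a assume "a \<in> {..p}"
    then have "of_nat (p choose a) / fact p = (1 / fact a) * (1 / fact (p - a) :: real)"
      by (simp add: binomial_fact)
    then show "(of_nat (p choose a) / fact p) *\<^sub>R br ((D ^^ a) u) ((D ^^ (p - a)) v) =
        br (divided_power D a u) (divided_power D (p - a) v)"
      by (simp add: divided_power_def bilinear_lmul[OF assms(1)] bilinear_rmul[OF assms(1)])
  qed
  finally show ?thesis .
qed

definition ad_chain :: "('a \<Rightarrow> 'a \<Rightarrow> 'a) \<Rightarrow> nat \<Rightarrow> (nat \<Rightarrow> 'a) \<Rightarrow> 'a \<Rightarrow> 'a" where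
  "ad_chain br q v w = foldr (\<lambda>i. br (v i)) [0..<q] w"

lemma ad_chain_0 [simp]: "ad_chain br 0 v w = w"
  by (simp add: ad_chain_def)

lemma ad_chain_Suc: "ad_chain br (Suc q) v w = ad_chain br q v (br (v q) w)"
  by (simp add: ad_chain_def)

lemma ad_chain_cong: "(\<And>i. i < q \<Longrightarrow> v i = v' i) \<Longrightarrow> ad_chain br q v w = ad_chain br q v' w"
  by (induction q arbitrary: w) (simp_all add: ad_chain_Suc)

lemma ad_chain_const: "ad_chain br q (\<lambda>_. x) w = (br x ^^ q) w"
  by (induction q arbitrary: w) (simp_all add: ad_chain_Suc funpow_swap1)

lemma linear_ad_chain:
  assumes "bilinear br"
  shows "linear (ad_chain br q v)"
proof (induction q)
  case 0
  show ?case by (simp add: linear_id id_def[symmetric])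
next
  case (Suc q)
  have "ad_chain br (Suc q) v = ad_chain br q v \<circ> br (v q)"
    by (simp add: ad_chain_Suc fun_eq_iff)
  with Suc assms show ?case
    by (metis bilinear_def linear_compose)
qed

definition weak_compositions :: "nat \<Rightarrow> nat \<Rightarrow> ((nat \<Rightarrow> nat) \<times> nat) set" where
  "weak_compositions q p =
     {(s, k). s \<in> {0..<q} \<rightarrow>\<^sub>E {..p} \<and> k \<le> p \<and> sum s {0..<q} + k = p}"

lemma finite_weak_compositions: "finite (weak_compositions q p)"
proof (rule finite_subset)
  show "weak_compositions q p \<subseteq> ({0..<q} \<rightarrow>\<^sub>E {..p}) \<times> {..p}"
    by (auto simp: weak_compositions_def)
qed (simp add: finite_PiE)

lemma weak_compositions_0: "weak_compositions 0 p = {(\<lambda>_. undefined, p)}"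
  by (auto simp: weak_compositions_def)

lemma sum_fun_upd_atLeast0_lessThan: "sum (s(q := a)) {0..<q} = sum s {0..<(q::nat)}"
  by (rule sum.cong) auto

lemma bij_betw_weak_compositions_Suc:
  "bij_betw (\<lambda>((s, k), a). (s(q := a), k - a))
     (SIGMA z:weak_compositions q p. {..snd z}) (weak_compositions (Suc q) p)"
proof (rule bij_betw_byWitness[where f' = "\<lambda>(s, k). ((s(q := undefined), k + s q), s q)"],
    safe, simp_all)
  fix s k assume "(s, k) \<in> weak_compositions q p"
  then have "s \<in> {0..<q} \<rightarrow>\<^sub>E {..p}"
    by (simp add: weak_compositions_def)
  then have "s q = undefined"
    by (rule PiE_arb) simp
  then show "s(q := undefined) = s"
    by (rule fun_upd_idem)
next
  fix s k a assume "(s, k) \<in> weak_compositions q p" and a: "a \<le> k"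
  then have s: "s \<in> {0..<q} \<rightarrow>\<^sub>E {..p}" and k: "k \<le> p" "sum s {0..<q} + k = p"
    by (simp_all add: weak_compositions_def)
  have "s(q := a) \<in> {0..<Suc q} \<rightarrow>\<^sub>E {..p}"
    unfolding atLeast0_lessThan_Suc using s a k by (intro PiE_fun_upd) auto
  then show "(s(q := a), k - a) \<in> weak_compositions (Suc q) p"
    using k a by (simp add: weak_compositions_def sum_fun_upd_atLeast0_lessThan)
next
  fix s k assume "(s, k) \<in> weak_compositions (Suc q) p"
  then have s: "s \<in> {0..<Suc q} \<rightarrow>\<^sub>E {..p}" and k: "sum s {0..<q} + (k + s q) = p"
    by (simp_all add: weak_compositions_def)
  have "s(q := undefined) \<in> {0..<q} \<rightarrow>\<^sub>E {..p}"
    using s by (intro fun_upd_in_PiE) (auto simp: atLeast0_lessThan_Suc)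
  then show "(s(q := undefined), k + s q) \<in> weak_compositions q p"
    using k by (simp add: weak_compositions_def sum_fun_upd_atLeast0_lessThan)
qed

lemma sum_weak_compositions_Suc:
  "(\<Sum>c\<in>weak_compositions (Suc q) p. f c) =
   (\<Sum>(s, k)\<in>weak_compositions q p. \<Sum>a\<le>k. f (s(q := a), k - a))"
proof -
  define g where "g z a = f ((fst z)(q := a), snd z - a)" for z a
  have "(\<Sum>z\<in>weak_compositions q p. \<Sum>a\<le>snd z. g z a) =
      (\<Sum>(z, a)\<in>(SIGMA z:weak_compositions q p. {..snd z}). g z a)"
    by (rule sum.Sigma) (simp_all add: finite_weak_compositions)
  also have "\<dots> = (\<Sum>c\<in>weak_compositions (Suc q) p. f c)"
    using sum.reindex_bij_betw[OF bij_betw_weak_compositions_Suc, of f]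
    by (simp add: g_def case_prod_unfold)
  finally show ?thesis
    by (simp add: g_def case_prod_unfold)
qed

lemma sum_weak_compositions_permute:
  assumes \<sigma>: "\<sigma> permutes {0..<q}"
  shows "(\<Sum>(s, k)\<in>weak_compositions q p. f (restrict (s \<circ> \<sigma>) {0..<q}) k) =
    (\<Sum>(s, k)\<in>weak_compositions q p. f s k)"
proof -
  let ?W = "weak_compositions q p"
  define \<pi> where "\<pi> c = (restrict (fst c \<circ> \<sigma>) {0..<q}, snd c)" for c :: "(nat \<Rightarrow> nat) \<times> nat"
  have \<sigma>_in: "\<sigma> i \<in> {0..<q}" if "i \<in> {0..<q}" for i
    using that permutes_in_image[OF \<sigma>] by simp
  have "\<pi> c \<in> ?W" if "c \<in> ?W" for c
  proof -
    obtain s k where c: "c = (s, k)"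
      by (metis prod.collapse)
    then have s: "s \<in> {0..<q} \<rightarrow>\<^sub>E {..p}" and "k \<le> p" "sum s {0..<q} + k = p"
      using that by (simp_all add: weak_compositions_def)
    moreover have "restrict (s \<circ> \<sigma>) {0..<q} \<in> {0..<q} \<rightarrow>\<^sub>E {..p}"
      using s \<sigma>_in by auto
    moreover have "sum (restrict (s \<circ> \<sigma>) {0..<q}) {0..<q} = sum s {0..<q}"
      using sum.permute[OF \<sigma>, of s] by simp
    ultimately show "\<pi> c \<in> ?W"
      by (simp add: c \<pi>_def weak_compositions_def)
  qed
  then have "\<pi> ` ?W \<subseteq> ?W"
    by (rule image_subsetI)
  moreover have "inj_on \<pi> ?W"
  proof (rule inj_onI, clarify)
    fix s k s' k' assume mem: "(s, k) \<in> ?W" "(s', k') \<in> ?W" and eq: "\<pi> (s, k) = \<pi> (s', k')"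
    from mem have s: "s \<in> {0..<q} \<rightarrow>\<^sub>E {..p}" and s': "s' \<in> {0..<q} \<rightarrow>\<^sub>E {..p}"
      by (simp_all add: weak_compositions_def)
    have "s j = s' j" if "j \<in> {0..<q}" for j
    proof -
      from that have "j \<in> \<sigma> ` {0..<q}"
        by (simp add: permutes_image[OF \<sigma>])
      then obtain i where "i \<in> {0..<q}" "\<sigma> i = j"
        by (rule imageE) simp
      then show ?thesis
        using fun_cong[OF arg_cong[OF eq, of fst], of i] by (simp add: \<pi>_def)
    qed
    then have "s = s'"
      by (rule PiE_ext[OF s s'])
    then show "s = s' \<and> k = k'"
      using eq by (simp add: \<pi>_def)
  qed
  ultimately have "\<pi> ` ?W = ?W"
    by (simp add: endo_inj_surj finite_weak_compositions)
  then have "(\<Sum>(s, k)\<in>?W. f s k) = (\<Sum>c\<in>?W. (\<lambda>(s, k). f s k) (\<pi> c))"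
    using sum.reindex[OF \<open>inj_on \<pi> ?W\<close>, of "\<lambda>(s, k). f s k"] by simp
  then show ?thesis
    by (simp add: \<pi>_def case_prod_unfold)
qed

lemma divided_power_ad_chain:
  assumes "bilinear br" and "derivation br D"
  shows "divided_power D p (ad_chain br q u w) =
    (\<Sum>(s, k)\<in>weak_compositions q p.
       ad_chain br q (\<lambda>i. divided_power D (s i) (u i)) (divided_power D k w))"
proof (induction q arbitrary: p w)
  case 0
  show ?case by (simp add: weak_compositions_0)
next
  case (Suc q)
  let ?u = "\<lambda>s i. divided_power D (s i) (u i)"
  have ad_chain_extend: "ad_chain br (Suc q) (?u (s(q := a))) v =
      ad_chain br q (?u s) (br (divided_power D a (u q)) v)" for s a v
    by (simp add: ad_chain_Suc) (rule ad_chain_cong, simp)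
  have "divided_power D p (ad_chain br (Suc q) u w) =
      (\<Sum>(s, k)\<in>weak_compositions q p. ad_chain br q (?u s) (divided_power D k (br (u q) w)))"
    by (simp add: ad_chain_Suc Suc.IH)
  also have "\<dots> = (\<Sum>(s, k)\<in>weak_compositions q p. \<Sum>a\<le>k.
      ad_chain br q (?u s) (br (divided_power D a (u q)) (divided_power D (k - a) w)))"
    by (simp add: divided_power_Leibniz[OF assms] linear_sum[OF linear_ad_chain[OF assms(1)]])
  also have "\<dots> = (\<Sum>(s, k)\<in>weak_compositions q p. \<Sum>a\<le>k.
      ad_chain br (Suc q) (?u (s(q := a))) (divided_power D (k - a) w))"
    by (simp only: ad_chain_extend)
  also have "\<dots> = (\<Sum>(s, k)\<in>weak_compositions (Suc q) p.
      ad_chain br (Suc q) (?u s) (divided_power D k w))"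
    by (simp add: sum_weak_compositions_Suc[of _ q p] case_prod_unfold)
  finally show ?case .
qed

lemma card_permutations_atLeast0_lessThan: "card {\<sigma>. \<sigma> permutes {0..<n}} = fact n"
  by (rule card_permutations) simp_all

lemma A0_eq_sum_ad_chain:
  "A0 br n xs y =
    (1 / (fact n)^2) *\<^sub>R (\<Sum>\<sigma> | \<sigma> permutes {0..<n}. ad_chain br n (xs \<circ> \<sigma>) y)"
proof (cases "n = 0")
  case True
  then have "{\<sigma>. \<sigma> permutes {0..<n}} = {id}"
    by (simp add: permutes_empty)
  with True show ?thesis
    by (simp add: A0_def)
qed (simp add: A0_def ad_chain_def comp_def)

lemma A0_const: "A0 br n (\<lambda>_. x) y = divided_power (br x) n y"
proof -
  have "A0 br n (\<lambda>_. x) y = (1 / (fact n)^2) *\<^sub>R (fact n *\<^sub>R (br x ^^ n) y)"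
    by (simp add: A0_eq_sum_ad_chain comp_def ad_chain_const sum_constant_scaleR
        card_permutations_atLeast0_lessThan)
  then show ?thesis
    by (simp add: divided_power_def power2_eq_square)
qed

lemma sum_A0_weak_compositions:
  "(\<Sum>(s, k)\<in>weak_compositions q p. A0 br q (\<lambda>i. g (s i)) (h k)) =
   (1 / fact q) *\<^sub>R (\<Sum>(s, k)\<in>weak_compositions q p. ad_chain br q (\<lambda>i. g (s i)) (h k))"
proof -
  let ?W = "weak_compositions q p" and ?S = "{\<sigma>. \<sigma> permutes {0..<q}}"
  define F where "F s k = ad_chain br q (\<lambda>i. g (s i)) (h k)" for s k
  have permuted: "(\<Sum>(s, k)\<in>?W. F (s \<circ> \<sigma>) k) = (\<Sum>(s, k)\<in>?W. F s k)" if "\<sigma> \<in> ?S" for \<sigma>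
  proof -
    have "(\<Sum>(s, k)\<in>?W. F (s \<circ> \<sigma>) k) = (\<Sum>(s, k)\<in>?W. F (restrict (s \<circ> \<sigma>) {0..<q}) k)"
      unfolding F_def by (intro sum.cong refl) (auto intro: ad_chain_cong)
    also have "\<dots> = (\<Sum>(s, k)\<in>?W. F s k)"
      using that by (simp add: sum_weak_compositions_permute)
    finally show ?thesis .
  qed
  have "(\<Sum>(s, k)\<in>?W. A0 br q (\<lambda>i. g (s i)) (h k)) =
      (1 / (fact q)^2) *\<^sub>R (\<Sum>(s, k)\<in>?W. \<Sum>\<sigma>\<in>?S. F (s \<circ> \<sigma>) k)"
    by (simp add: A0_eq_sum_ad_chain F_def comp_def scaleR_sum_right case_prod_unfold)
  also have "\<dots> = (1 / (fact q)^2) *\<^sub>R (\<Sum>\<sigma>\<in>?S. \<Sum>(s, k)\<in>?W. F (s \<circ> \<sigma>) k)"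
    unfolding case_prod_unfold by (subst sum.swap) (rule refl)
  also have "\<dots> = (1 / (fact q)^2) *\<^sub>R (fact q *\<^sub>R (\<Sum>(s, k)\<in>?W. F s k))"
    by (simp add: permuted sum_constant_scaleR card_permutations_atLeast0_lessThan)
  finally show ?thesis
    by (simp add: F_def power2_eq_square)
qed

lemma left_leibniz_bilinear: "left_leibniz br \<Longrightarrow> bilinear br"
  by (simp add: left_leibniz_def)

lemma left_leibniz_derivation: "left_leibniz br \<Longrightarrow> derivation br (br x)"
  unfolding left_leibniz_def derivation_def bilinear_def by blast

lemma sums_A0_const_canon_rack:
  assumes "left_leibniz br"
  shows "(\<lambda>n. A0 br n (\<lambda>_. x) y) sums canon_rack br x y"
proof -
  have "bounded_linear (br x)"
    using left_leibniz_derivation[OF assms] by (simp add: derivation_def linear_conv_bounded_linear)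
  then show ?thesis
    using summable_sums[OF summable_divided_power]
    by (simp add: A0_const canon_rack_def divided_power_def)
qed

lemma A0_const_A0_const:
  assumes "left_leibniz br"
  shows "A0 br p (\<lambda>_. x) (A0 br q (\<lambda>_. y) z) =
    (\<Sum>(s, k)\<in>weak_compositions q p. A0 br q (\<lambda>i. A0 br (s i) (\<lambda>_. x) y) (A0 br k (\<lambda>_. x) z))"
proof -
  have bilinear: "bilinear br" and derivation: "derivation br (br x)"
    using assms by (simp_all add: left_leibniz_bilinear left_leibniz_derivation)
  have "A0 br q (\<lambda>_. y) z = (1 / fact q) *\<^sub>R ad_chain br q (\<lambda>_. y) z"
    by (simp add: A0_const divided_power_def ad_chain_const)
  then have "A0 br p (\<lambda>_. x) (A0 br q (\<lambda>_. y) z) =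
      (1 / fact q) *\<^sub>R divided_power (br x) p (ad_chain br q (\<lambda>_. y) z)"
    using derivation by (simp add: A0_const linear_cmul[OF linear_divided_power] derivation_def)
  also have "\<dots> = (\<Sum>(s, k)\<in>weak_compositions q p.
      A0 br q (\<lambda>i. divided_power (br x) (s i) y) (divided_power (br x) k z))"
    by (simp add: divided_power_ad_chain[OF bilinear derivation] sum_A0_weak_compositions
        [where g = "\<lambda>n. divided_power (br x) n y" and h = "\<lambda>n. divided_power (br x) n z"])
  finally show ?thesis
    by (simp add: A0_const)
qed

theorem corollary2:
  fixes br :: "'a::euclidean_space \<Rightarrow> 'a \<Rightarrow> 'a"
  assumes "left_leibniz br"
  shows "(\<forall>x y. (\<lambda>n. A0 br n (\<lambda>_. x) y) sums canon_rack br x y) \<and>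
         (\<forall>p q x y z. p \<ge> 1 \<longrightarrow> q \<ge> 1 \<longrightarrow>
            A0 br p (\<lambda>_. x) (A0 br q (\<lambda>_. y) z) =
            (\<Sum>(s, k) \<in> {(s, k). s \<in> {0..<q} \<rightarrow>\<^sub>E {..p} \<and> k \<le> p \<and> sum s {0..<q} + k = p}.
               A0 br q (\<lambda>i. A0 br (s i) (\<lambda>_. x) y) (A0 br k (\<lambda>_. x) z)))"
  using sums_A0_const_canon_rack[OF assms] A0_const_A0_const[OF assms]
  by (simp add: weak_compositions_def)

end
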